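(* Let $(\mathtt{g},\sigma)$ be a magnetic system on a closed manifold $M$, let $s>0$ and $\Sigma_s=\{v\in TM:\|v\|=s\}$. Then for every $v\in\Sigma_s$ and all $\xi,\eta\in T_v\Sigma_s$, \[ \omega^\sigma(\xi,\eta)=\langle[\pi_*\xi]^\perp,K^\sigma(\eta)\rangle-\langle K^\sigma(\xi),[\pi_*\eta]^\perp\rangle . \] In particular, the restriction of $\omega^\sigma$ to $T_v\Sigma_s$ is degenerate, and its kernel is the line $\mathbb{R}X^{\mathtt{g},\sigma}_v$.
   Context: A magnetic system is a pair $(\mathtt{g},\sigma)$, $\mathtt{g}=\langle\cdot,\cdot\rangle$ a Riemannian metric, $\sigma$ a closed $2$-form; the Lorentz force $\Omega$ is the skew-adjoint endomorphism of $TM$ with $\sigma(v,w)=\langle v,\Omega(w)\rangle$. $\pi:TM\to M$ is the projection and $K:T(TM)\to TM$ is the Levi-Civita connector: if $Z(t)$ is a curve in $TM$ with $Z(0)=v$ and $\dot Z(0)=\xi$, then $K(\xi)=\frac{{\rm D}Z}{{\rm d}t}(0)$, the Levi-Civita covariant derivative of $Z$ along $\pi\circ Z$. The twisted symplectic form on $TM$ is $\omega^\sigma(\xi,\eta)=\langle\pi_*\xi,K(\eta)\rangle-\langle K(\xi),\pi_*\eta\rangle-\sigma(\pi_*\xi,\pi_*\eta)$. For a unit vector $u$ and $w\in T_{\pi(u)}M$ let $\widetilde\Omega_u(w)=\frac12\big(\langle\Omega(w),u\rangle u+\langle w,u\rangle\Omega(u)+\Omega(w)\big)$. For $\xi\in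 T_v(TM)$ with $v\in\Sigma_s$, the twisted connector is $K^\sigma(\xi)=K(\xi)-\widetilde\Omega_{v/s}(\pi_*\xi)$. For $v\in\Sigma_s$, $[\cdot]^\perp$ denotes orthogonal projection of $T_{\pi(v)}M$ onto $v^\perp$. $X^{\mathtt{g},\sigma}$ is the generator of the magnetic flow on $TM$, i.e. the vector field whose integral curves are $t\mapsto\dot\gamma(t)$ for curves $\gamma$ satisfying $\frac{{\rm D}\dot\gamma}{{\rm d}t}=\Omega(\dot\gamma)$; it is tangent to $\Sigma_s$. *)

theory Defs
  imports "HOL-Analysis.Analysis"
begin

(* Fibrewise model at a fixed v in TM with x = pi(v):
   'a  models T_x M with the Riemannian inner product g_x,
   'b  models T_v(TM), pis :: 'b => 'a models pi_* at v,
   K :: 'b => 'a models the Levi-Civita connector at v,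
   Om :: 'a => 'a models the Lorentz force at x. *)

text \<open>Twisted symplectic form, with sigma(a,b) = <a, Om b>.\<close>
definition omega_sig :: "('a::euclidean_space \<Rightarrow> 'a) \<Rightarrow> ('b \<Rightarrow> 'a) \<Rightarrow> ('b \<Rightarrow> 'a) \<Rightarrow> 'b \<Rightarrow> 'b \<Rightarrow> real" where
  "omega_sig Om pis K xi eta =
     inner (pis xi) (K eta) - inner (K xi) (pis eta) - inner (pis xi) (Om (pis eta))"

definition Omega_tilde :: "('a::euclidean_space \<Rightarrow> 'a) \<Rightarrow> 'a \<Rightarrow> 'a \<Rightarrow> 'a" where
  "Omega_tilde Om u w = (1/2) *\<^sub>R (inner (Om w) u *\<^sub>R u + inner w u *\<^sub>R Om u + Om w)"

definition K_sig :: "('a::euclidean_space \<Rightarrow> 'a) \<Rightarrow> ('b \<Rightarrow> 'a) \<Rightarrow> ('b \<Rightarrow> 'a) \<Rightarrow> real \<Rightarrow> 'a \<Rightarrow> 'b \<Rightarrow> 'a" where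
  "K_sig Om pis K s v xi = K xi - Omega_tilde Om ((1/s) *\<^sub>R v) (pis xi)"

definition perp :: "'a::euclidean_space \<Rightarrow> 'a \<Rightarrow> 'a" where
  "perp v w = w - (inner w v / inner v v) *\<^sub>R v"

text \<open>T_v Sigma_s: kernel of the differential of the norm function, d(|.|^2/2)(xi) = <v, K xi>.\<close>
definition TSigma :: "('b \<Rightarrow> 'a::euclidean_space) \<Rightarrow> 'a \<Rightarrow> 'b set" where
  "TSigma K v = {xi. inner v (K xi) = 0}"

end

theory Submission
  imports Defs
begin

text \<open>
  Write \<open>u = v/s\<close>. Pairing \<open>[a]\<^sup>\<perp>\<close> with \<open>\<Omega>\<^sup>~\<^sub>u b\<close> gives \<open>\<sigma>(a,b)/2\<close> plus a term
  symmetric in \<open>a, b\<close>, so the two twisted correction terms together cancel exactly the magnetic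
  term of \<open>\<omega>\<^sup>\<sigma>\<close>, while \<open>[\<cdot>]\<^sup>\<perp>\<close> is invisible against the vertical parts, which lie in
  \<open>v\<^sup>\<perp>\<close> on \<open>T\<Sigma>\<^sub>s\<close>. For the kernel, since \<open>(\<pi>\<^sub>*, K)\<close> identifies \<open>T\<^sub>v(TM)\<close> with
  \<open>T\<^sub>xM \<times> T\<^sub>xM\<close>, one can test a null vector \<open>\<xi>\<close> against a purely horizontal
  \<open>\<eta>\<close> with \<open>\<pi>\<^sub>*\<eta> = K\<xi> - \<Omega>(\<pi>\<^sub>*\<xi>)\<close> and a purely vertical \<open>\<eta>\<close> with \<open>K\<eta> = [\<pi>\<^sub>*\<xi>]\<^sup>\<perp>\<close>; this
  forces \<open>K\<xi> = \<Omega>(\<pi>\<^sub>*\<xi>)\<close> and \<open>\<pi>\<^sub>*\<xi> \<in> \<real>v\<close>, i.e. \<open>\<xi> \<in> \<real>X\<close>.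
\<close>

lemma skew_inner_swap:
  assumes "\<And>a b. inner a (Om b) = - inner (Om a) b"
  shows "inner a (Om b) = - inner b (Om a)"
  using assms[of a b] by (simp add: inner_commute)

lemma perp_scaleR: "c \<noteq> 0 \<Longrightarrow> perp (c *\<^sub>R v) w = perp v w"
  by (simp add: perp_def)

lemma perp_unit: "norm u = 1 \<Longrightarrow> perp u w = w - inner w u *\<^sub>R u"
  by (simp add: perp_def power2_norm_eq_inner[symmetric])

lemma inner_perp_self: "inner v (perp v w) = 0"
  by (cases "v = 0") (simp_all add: perp_def inner_diff_right inner_commute)

lemma inner_perp_orthogonal: "inner v A = 0 \<Longrightarrow> inner (perp v w) A = inner w A"
  by (simp add: perp_def inner_diff_left)

lemma perp_eq_0_if_inner_perp:
  assumes "inner w (perp v w) = 0"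
  shows "perp v w = 0"
proof -
  have "inner (perp v w) (perp v w) = inner w (perp v w)"
    using inner_perp_self[of v w] by (subst (1) perp_def) (simp add: inner_diff_left)
  with assms show ?thesis
    by simp
qed

lemma inner_perp_Omega_tilde:
  assumes skew: "\<And>a b. inner a (Om b) = - inner (Om a) b" and u: "norm u = 1"
  shows "inner (perp u a) (Omega_tilde Om u b) =
    (1/2) * inner a (Om b) + (1/2) * (inner b u * inner a (Om u) + inner a u * inner b (Om u))"
proof -
  have "inner u (Om u) = 0"
    using skew_inner_swap[OF skew, of u u] by simp
  moreover have "inner u (Om b) = - inner b (Om u)"
    using skew_inner_swap[OF skew] .
  moreover have "inner u u = 1"
    using u by (simp add: power2_norm_eq_inner[symmetric])
  ultimately show ?thesis
    unfolding perp_unit[OF u] Omega_tilde_def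
    by (simp add: inner_add_right inner_diff_left inner_commute[of "Om b" u] algebra_simps)
qed

lemma twisted_splitting_unit:
  assumes skew: "\<And>a b. inner a (Om b) = - inner (Om a) b" and u: "norm u = 1"
    and A: "inner u A = 0" and B: "inner u B = 0"
  shows "inner a B - inner A b - inner a (Om b) =
    inner (perp u a) (B - Omega_tilde Om u b) - inner (A - Omega_tilde Om u a) (perp u b)"
proof -
  have "inner (perp u a) (Omega_tilde Om u b) - inner (perp u b) (Omega_tilde Om u a)
        = inner a (Om b)"
    using skew_inner_swap[OF skew, of b a]
    by (simp add: inner_perp_Omega_tilde[OF skew u] algebra_simps)
  then show ?thesis
    using inner_perp_orthogonal[OF A, of b] inner_perp_orthogonal[OF B, of a]
    by (simp add: inner_diff_left inner_diff_right inner_commute[of A] inner_commute[of _ "perp u b"])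
qed

lemma omega_sig_twisted_splitting:
  assumes skew: "\<And>a b. inner a (Om b) = - inner (Om a) b"
    and s: "s > 0" "norm v = s"
    and xi: "xi \<in> TSigma K v" and eta: "eta \<in> TSigma K v"
  shows "omega_sig Om pis K xi eta =
    inner (perp v (pis xi)) (K_sig Om pis K s v eta) - inner (K_sig Om pis K s v xi) (perp v (pis eta))"
proof -
  define u where "u = (1/s) *\<^sub>R v"
  have "norm u = 1" and "perp u = perp v"
    using s by (auto simp: u_def perp_scaleR)
  moreover have "inner u (K xi) = 0" "inner u (K eta) = 0"
    using xi eta by (simp_all add: u_def TSigma_def)
  ultimately show ?thesis
    using twisted_splitting_unit[OF skew, of u "K xi" "K eta" "pis xi" "pis eta"]
    by (simp add: omega_sig_def K_sig_def u_def[symmetric])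
qed

lemma TSigma_subspace: "linear K \<Longrightarrow> subspace (TSigma K v)"
  by (simp add: subspace_def TSigma_def linear_0 linear_add linear_scale inner_add_right)

lemma omega_sig_scaleR_left:
  "linear pis \<Longrightarrow> linear K \<Longrightarrow> omega_sig Om pis K (c *\<^sub>R xi) eta = c * omega_sig Om pis K xi eta"
  by (simp add: omega_sig_def linear_scale algebra_simps)

lemma magnetic_in_TSigma:
  assumes "\<And>a b. inner a (Om b) = - inner (Om a) b" and "K X = Om v"
  shows "X \<in> TSigma K v"
  using assms skew_inner_swap[OF assms(1), of v v] by (simp add: TSigma_def)

lemma omega_sig_magnetic_left:
  assumes skew: "\<And>a b. inner a (Om b) = - inner (Om a) b"
    and "pis X = v" "K X = Om v"
  shows "\<forall>eta\<in>TSigma K v. omega_sig Om pis K X eta = 0"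
  using assms skew_inner_swap[OF skew, of "pis eta" v] by (simp add: omega_sig_def TSigma_def inner_commute)

lemma surj_pairE:
  assumes "surj (\<lambda>x. (f x, g x))"
  obtains x where "f x = a" "g x = b"
  using surjD[OF assms, of "(a, b)"] by auto

lemma omega_sig_null_imp_K_eq:
  assumes skew: "\<And>a b. inner a (Om b) = - inner (Om a) b"
    and surj: "surj (\<lambda>xi. (pis xi, K xi))"
    and null: "\<forall>eta\<in>TSigma K v. omega_sig Om pis K xi eta = 0"
  shows "K xi = Om (pis xi)"
proof -
  obtain eta where eta: "pis eta = K xi - Om (pis xi)" "K eta = 0"
    using surj by (rule surj_pairE)
  then have "omega_sig Om pis K xi eta = 0"
    using null by (simp add: TSigma_def)
  moreover have "omega_sig Om pis K xi eta = - inner (K xi - Om (pis xi)) (K xi - Om (pis xi))"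
    using eta skew_inner_swap[OF skew, of "pis xi" "pis eta"]
    by (simp add: omega_sig_def inner_diff_left inner_diff_right inner_commute[of "K xi" "Om (pis xi)"])
  ultimately have "inner (K xi - Om (pis xi)) (K xi - Om (pis xi)) = 0"
    by simp
  then show ?thesis
    by simp
qed

lemma omega_sig_null_imp_perp_eq_0:
  assumes skew: "\<And>a b. inner a (Om b) = - inner (Om a) b"
    and surj: "surj (\<lambda>xi. (pis xi, K xi))"
    and null: "\<forall>eta\<in>TSigma K v. omega_sig Om pis K xi eta = 0"
  shows "perp v (pis xi) = 0"
proof -
  obtain eta where eta: "pis eta = 0" "K eta = perp v (pis xi)"
    using surj by (rule surj_pairE)
  then have "omega_sig Om pis K xi eta = 0"
    using null by (simp add: TSigma_def inner_perp_self)
  then show ?thesis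
    using eta skew[of "pis xi" 0] by (simp add: omega_sig_def perp_eq_0_if_inner_perp)
qed

lemma split_eq_scaleR:
  assumes "inj (\<lambda>xi. (pis xi, K xi))" "linear pis" "linear K"
    and "pis xi = c *\<^sub>R pis X" "K xi = c *\<^sub>R K X"
  shows "xi = c *\<^sub>R X"
proof -
  have "(pis xi, K xi) = (pis (c *\<^sub>R X), K (c *\<^sub>R X))"
    using assms(2-5) by (simp add: linear_scale)
  then show ?thesis
    using injD[OF assms(1)] by blast
qed

lemma omega_sig_null_space:
  assumes skew: "\<And>a b. inner a (Om b) = - inner (Om a) b" and "linear Om"
    and "linear pis" "linear K" and split: "bij (\<lambda>xi. (pis xi, K xi))"
    and X: "pis X = v" "K X = Om v"
  shows "{xi\<in>TSigma K v. \<forall>eta\<in>TSigma K v. omega_sig Om pis K xi eta = 0} = range (\<lambda>c. c *\<^sub>R X)"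
proof (intro equalityI subsetI)
  fix xi
  assume "xi \<in> {xi\<in>TSigma K v. \<forall>eta\<in>TSigma K v. omega_sig Om pis K xi eta = 0}"
  then have null: "\<forall>eta\<in>TSigma K v. omega_sig Om pis K xi eta = 0"
    by simp
  define c where "c = inner (pis xi) v / inner v v"
  have "pis xi = c *\<^sub>R v"
    using omega_sig_null_imp_perp_eq_0[OF skew bij_is_surj[OF split] null] by (simp add: perp_def c_def)
  moreover have "K xi = Om (pis xi)"
    using omega_sig_null_imp_K_eq[OF skew bij_is_surj[OF split] null] .
  ultimately have "xi = c *\<^sub>R X"
    using split_eq_scaleR[OF bij_is_inj[OF split] \<open>linear pis\<close> \<open>linear K\<close>] X \<open>linear Om\<close>
    by (simp add: linear_scale)
  then show "xi \<in> range (\<lambda>c. c *\<^sub>R X)"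
    by blast
next
  fix xi
  assume "xi \<in> range (\<lambda>c. c *\<^sub>R X)"
  then obtain c where "xi = c *\<^sub>R X"
    by blast
  moreover have "X \<in> TSigma K v"
    using skew X(2) by (rule magnetic_in_TSigma)
  moreover have "\<forall>eta\<in>TSigma K v. omega_sig Om pis K X eta = 0"
    using skew X by (rule omega_sig_magnetic_left)
  ultimately show "xi \<in> {xi\<in>TSigma K v. \<forall>eta\<in>TSigma K v. omega_sig Om pis K xi eta = 0}"
    using subspace_scale[OF TSigma_subspace[OF \<open>linear K\<close>]]
      omega_sig_scaleR_left[OF \<open>linear pis\<close> \<open>linear K\<close>]
    by simp
qed

theorem lemma4p1:
  fixes Om :: "'a::euclidean_space \<Rightarrow> 'a"
    and pis K :: "'b::real_vector \<Rightarrow> 'a"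
    and v :: 'a and s :: real and X :: 'b
  assumes Om_lin: "linear Om"
    and Om_skew: "\<And>a b. inner a (Om b) = - inner (Om a) b"
    and pis_lin: "linear pis" and K_lin: "linear K"
    and split: "bij (\<lambda>xi. (pis xi, K xi))"
    and s_pos: "s > 0" and v_norm: "norm v = s"
    and X_pi: "pis X = v" and X_K: "K X = Om v"
  shows "(\<forall>xi\<in>TSigma K v. \<forall>eta\<in>TSigma K v.
           omega_sig Om pis K xi eta =
             inner (perp v (pis xi)) (K_sig Om pis K s v eta)
             - inner (K_sig Om pis K s v xi) (perp v (pis eta)))
       \<and> (\<exists>xi\<in>TSigma K v. xi \<noteq> 0 \<and> (\<forall>eta\<in>TSigma K v. omega_sig Om pis K xi eta = 0))
       \<and> {xi\<in>TSigma K v. \<forall>eta\<in>TSigma K v. omega_sig Om pis K xi eta = 0}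
           = range (\<lambda>c. c *\<^sub>R X)"
proof -
  have null_space: "{xi\<in>TSigma K v. \<forall>eta\<in>TSigma K v. omega_sig Om pis K xi eta = 0}
      = range (\<lambda>c. c *\<^sub>R X)"
    using omega_sig_null_space[OF Om_skew Om_lin pis_lin K_lin split X_pi X_K] .
  have "X \<noteq> 0"
    using X_pi s_pos v_norm linear_0[OF pis_lin] by auto
  moreover have "X \<in> range (\<lambda>c. c *\<^sub>R X)"
    by (metis rangeI scaleR_one)
  ultimately have "\<exists>xi\<in>TSigma K v. xi \<noteq> 0 \<and> (\<forall>eta\<in>TSigma K v. omega_sig Om pis K xi eta = 0)"
    using null_space by blast
  with null_space show ?thesis
    using omega_sig_twisted_splitting[OF Om_skew s_pos v_norm, where K = K and pis = pis] by blast
qed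

end
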